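(* Let $M,N\in\Lambda^{001}$ with $M\longrightarrow_\beta^\infty N$. Then there exist terms $M_0,M_1,M_2,\ldots\in\Lambda^{001}$ such that $M_0=M$ and, for every $d\in\mathbf N$, $$M_0\longrightarrow_{\beta\ge 0}^* M_1\longrightarrow_{\beta\ge1}^* M_2\longrightarrow_{\beta\ge2}^*\cdots\longrightarrow_{\beta\ge d-1}^* M_d \longrightarrow_{\beta\ge d}^\infty N.$$
   Context: Fix a set $\mathcal V$ of variables. A 001-infinitary λ-term is a possibly infinite tree built from variables $x\in\mathcal V$, abstractions $\lambda x.M$ and applications $(M)N$ ($N$ the argument), such that every infinite branch enters infinitely often the argument position of an application node; $\Lambda^{001}$ is the set of such terms, up to α-equivalence, with fresh variables always available. $M[N/x]$ denotes capture-avoiding substitution. One-step β-reduction $\longrightarrow_\beta$ is the contextual closure (finite derivations) of $(\lambda x.M)N\longrightarrow_\beta M[N/x]$; $\longrightarrow_\beta^*$ is its reflexive-transitive closure. The infinitary reduction $\longrightarrow_\beta^\infty$ is defined by the rules below, where derivations may be infinite provided every infinite branch passes infinitely often through the third premise of (@): (var) $M\longrightarrow_\beta^* x\Rightarrow M\longrightarrow_\beta^\infty x$; (λ) $M\longrightarrow_\beta^*\lambda x.P$ and $P\longrightarrow_\beta^\infty P'$ $\Rightarrow M\longrightarrow_\beta^\infty\lambda x.P'$; (@) $M\longrightarrow_\beta^*(P)Q$, $P\longrightarrow_\beta^\infty P'$, $Q\longrightarrow_\beta^\infty Q'$ $\Rightarrow M\longrightarrow_\beta^\infty(P')Q'$.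 Min-depth reduction: $\longrightarrow_{\beta\ge0}$ is $\longrightarrow_\beta$; for $d\ge0$, $\longrightarrow_{\beta\ge d+1}$ is defined inductively by: $M\longrightarrow_{\beta\ge d+1}N\Rightarrow\lambda x.M\longrightarrow_{\beta\ge d+1}\lambda x.N$; $M\longrightarrow_{\beta\ge d+1}N\Rightarrow(M)P\longrightarrow_{\beta\ge d+1}(N)P$; $M\longrightarrow_{\beta\ge d}N\Rightarrow(P)M\longrightarrow_{\beta\ge d+1}(P)N$ (i.e. contraction of a redex whose path from the root crosses at least $d+1$ argument positions). $\longrightarrow_{\beta\ge d}^*$ is its reflexive-transitive closure. Min-depth infinitary reduction: $\longrightarrow_{\beta\ge0}^\infty$ is $\longrightarrow_\beta^\infty$; for $d\ge1$, $\longrightarrow_{\beta\ge d}^\infty$ is defined inductively (finite derivations) by: $x\longrightarrow_{\beta\ge d}^\infty x$; $M\longrightarrow_{\beta\ge d}^\infty M'\Rightarrow\lambda x.M\longrightarrow_{\beta\ge d}^\infty\lambda x.M'$; ($M\longrightarrow_{\beta\ge d}^\infty M'$ and $N\longrightarrow_{\beta\ge d-1}^\infty N'$) $\Rightarrow (M)N\longrightarrow_{\beta\ge d}^\infty(M')N'$. *)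

theory Defs
  imports Main
begin

text \<open>Possibly infinite lambda-terms, represented with de Bruijn indices, so that
terms are identified up to alpha-equivalence. A free variable is an index that
is not bound by an enclosing abstraction.\<close>

codatatype iterm = Var nat | Lam iterm | App iterm iterm

inductive fin_spine :: "iterm \<Rightarrow> bool" where
  "fin_spine (Var n)"
| "fin_spine s \<Longrightarrow> fin_spine (Lam s)"
| "fin_spine s \<Longrightarrow> fin_spine (App s u)"

inductive reach :: "iterm \<Rightarrow> iterm \<Rightarrow> bool" where
  "reach t t"
| "reach s u \<Longrightarrow> reach (Lam s) u"
| "reach s u \<Longrightarrow> reach (App s v) u"
| "reach v u \<Longrightarrow> reach (App s v) u"

text \<open>001-terms: every infinite branch enters an argument position infinitely
often, i.e. no subterm admits an infinite branch avoiding argument positions.\<close>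

definition is001 :: "iterm \<Rightarrow> bool" where
  "is001 t \<longleftrightarrow> (\<forall>s. reach t s \<longrightarrow> fin_spine s)"

primcorec shift :: "nat \<Rightarrow> iterm \<Rightarrow> iterm" where
  "shift c t = (case t of
      Var n \<Rightarrow> Var (if n < c then n else Suc n)
    | Lam s \<Rightarrow> Lam (shift (Suc c) s)
    | App s v \<Rightarrow> App (shift c s) (shift c v))"

primcorec subst :: "nat \<Rightarrow> iterm \<Rightarrow> iterm \<Rightarrow> iterm" where
  "subst k u t = (case t of
      Var n \<Rightarrow> (if n = k then
                   (case u of Var m \<Rightarrow> Var m | Lam a \<Rightarrow> Lam a | App a b \<Rightarrow> App a b)
                 else Var (if k < n then n - 1 else n))
    | Lam s \<Rightarrow> Lam (subst (Suc k) (shift 0 u) s)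
    | App s v \<Rightarrow> App (subst k u s) (subst k u v))"

definition inst :: "iterm \<Rightarrow> iterm \<Rightarrow> iterm" where
  "inst s u = subst 0 u s"

inductive beta :: "iterm \<Rightarrow> iterm \<Rightarrow> bool" where
  redex: "beta (App (Lam s) u) (inst s u)"
| lam: "beta M N \<Longrightarrow> beta (Lam M) (Lam N)"
| appL: "beta M N \<Longrightarrow> beta (App M P) (App N P)"
| appR: "beta M N \<Longrightarrow> beta (App P M) (App P N)"

abbreviation beta_star :: "iterm \<Rightarrow> iterm \<Rightarrow> bool" where
  "beta_star \<equiv> beta\<^sup>*\<^sup>*"

inductive beta_ge :: "nat \<Rightarrow> iterm \<Rightarrow> iterm \<Rightarrow> bool" where
  zero: "beta M N \<Longrightarrow> beta_ge 0 M N"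
| lam: "beta_ge (Suc d) M N \<Longrightarrow> beta_ge (Suc d) (Lam M) (Lam N)"
| appL: "beta_ge (Suc d) M N \<Longrightarrow> beta_ge (Suc d) (App M P) (App N P)"
| appR: "beta_ge d M N \<Longrightarrow> beta_ge (Suc d) (App P M) (App P N)"

text \<open>Inner (inductive) layer of the mixed inductive/coinductive definition:
the parameter \<open>X\<close> is used only at the argument premise of the application rule.\<close>

inductive binf_step :: "(iterm \<Rightarrow> iterm \<Rightarrow> bool) \<Rightarrow> iterm \<Rightarrow> iterm \<Rightarrow> bool"
  for X :: "iterm \<Rightarrow> iterm \<Rightarrow> bool" where
  var: "beta_star M (Var x) \<Longrightarrow> binf_step X M (Var x)"
| lam: "beta_star M (Lam P) \<Longrightarrow> binf_step X P P' \<Longrightarrow> binf_step X M (Lam P')"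
| app: "beta_star M (App P Q) \<Longrightarrow> binf_step X P P' \<Longrightarrow> X Q Q'
          \<Longrightarrow> binf_step X M (App P' Q')"

text \<open>Derivations may be infinite as long as every infinite branch passes
infinitely often through the argument premise: greatest fixed point of the
least fixed point.\<close>

definition binf :: "iterm \<Rightarrow> iterm \<Rightarrow> bool" where
  "binf = gfp binf_step"

inductive binf_ge :: "nat \<Rightarrow> iterm \<Rightarrow> iterm \<Rightarrow> bool" where
  zero: "binf M N \<Longrightarrow> binf_ge 0 M N"
| var: "binf_ge (Suc d) (Var x) (Var x)"
| lam: "binf_ge (Suc d) M M' \<Longrightarrow> binf_ge (Suc d) (Lam M) (Lam M')"
| app: "binf_ge (Suc d) M M' \<Longrightarrow> binf_ge d N N' \<Longrightarrow> binf_ge (Suc d) (App M N) (App M' N')"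

end

theory Submission
  imports Defs
begin

text \<open>An infinitary reduction at depth \<open>\<ge> d\<close> from \<open>M\<close> to \<open>N\<close> factors as a finite reduction
  at depth \<open>\<ge> d\<close> from \<open>M\<close> to some \<open>M'\<close> followed by an infinitary reduction at depth \<open>\<ge> d + 1\<close>
  from \<open>M'\<close> to \<open>N\<close>: only finitely many nodes of the derivation lie above depth \<open>d + 1\<close> (for
  \<open>d = 0\<close> they form the inductive layer of \<open>binf_step\<close> down to the first argument positions),
  and \<open>M'\<close> is obtained by performing the finite reductions found at those nodes in context.
  Iterating the factorisation yields the sequence. Its terms are 001 because \<open>\<beta>\<close>-reduction
  preserves 001-terms: substituting a 001-term into a 001-term gives a 001-term.\<close>

lemma shift_simps [simp]:
  "shift c (Var n) = Var (if n < c then n else Suc n)"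
  "shift c (Lam s) = Lam (shift (Suc c) s)"
  "shift c (App s v) = App (shift c s) (shift c v)"
  by (subst shift.code; simp)+

lemma subst_Var: "subst k u (Var n) = (if n = k then u else Var (if k < n then n - 1 else n))"
  by (subst subst.code) (cases u; simp)

lemma subst_Lam [simp]: "subst k u (Lam s) = Lam (subst (Suc k) (shift 0 u) s)"
  by (subst subst.code) simp

lemma subst_App [simp]: "subst k u (App s v) = App (subst k u s) (subst k u v)"
  by (subst subst.code) simp

lemma is001_Lam [simp]: "is001 (Lam s) \<longleftrightarrow> is001 s"
  unfolding is001_def
  by (auto intro: reach.intros fin_spine.intros elim: reach.cases)

lemma is001_App [simp]: "is001 (App s v) \<longleftrightarrow> is001 s \<and> is001 v"
proof
  assume "is001 (App s v)"
  then show "is001 s \<and> is001 v"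
    unfolding is001_def by (auto intro: reach.intros)
next
  assume "is001 s \<and> is001 v"
  then show "is001 (App s v)"
    unfolding is001_def
    by (auto elim!: reach.cases[of "App s v"] intro: fin_spine.intros reach.intros)
qed

lemma fin_spine_shift: "fin_spine t \<Longrightarrow> fin_spine (shift c t)"
  by (induction t arbitrary: c rule: fin_spine.induct) (auto intro: fin_spine.intros)

lemma reach_shift: "reach (shift c t) r \<Longrightarrow> \<exists>c' t'. reach t t' \<and> r = shift c' t'"
proof (induction "shift c t" r arbitrary: c t rule: reach.induct)
  case 1
  then show ?case by (auto intro: reach.intros)
next
  case (2 s u)
  then show ?case by (cases t) (fastforce intro: reach.intros)+
next
  case (3 s u v)
  then show ?case by (cases t) (fastforce intro: reach.intros)+
next
  case (4 v u s)
  then show ?case by (cases t) (fastforce intro: reach.intros)+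
qed

lemma is001_shift: "is001 t \<Longrightarrow> is001 (shift c t)"
  unfolding is001_def using reach_shift fin_spine_shift by blast

lemma fin_spine_subst: "fin_spine t \<Longrightarrow> is001 u \<Longrightarrow> fin_spine (subst k u t)"
proof (induction t arbitrary: k u rule: fin_spine.induct)
  case (1 n)
  then show ?case by (auto simp: subst_Var is001_def intro: fin_spine.intros reach.intros)
qed (auto intro: fin_spine.intros is001_shift)

lemma reach_subst:
  assumes "reach (subst k u t) r" and "is001 u"
  shows "(\<exists>k' u' t'. reach t t' \<and> r = subst k' u' t' \<and> is001 u') \<or> (\<exists>u'. is001 u' \<and> reach u' r)"
  using assms
proof (induction "subst k u t" r arbitrary: k u t rule: reach.induct)
  case 1
  then show ?case by (auto intro: reach.intros)
next
  case (2 s r)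
  show ?case
  proof (cases t)
    case (Lam t')
    with 2 have "s = subst (Suc k) (shift 0 u) t'" by simp
    with 2 Lam is001_shift show ?thesis by (blast intro: reach.intros)
  qed (use 2 in \<open>auto simp: subst_Var split: if_splits intro: reach.intros\<close>)
next
  case (3 s r v)
  show ?case
  proof (cases t)
    case (App a b)
    with 3 have "s = subst k u a" by simp
    with 3 App show ?thesis by (blast intro: reach.intros)
  qed (use 3 in \<open>auto simp: subst_Var split: if_splits intro: reach.intros\<close>)
next
  case (4 v r s)
  show ?case
  proof (cases t)
    case (App a b)
    with 4 have "v = subst k u b" by simp
    with 4 App show ?thesis by (blast intro: reach.intros)
  qed (use 4 in \<open>auto simp: subst_Var split: if_splits intro: reach.intros\<close>)
qed

lemma is001_subst: "is001 t \<Longrightarrow> is001 u \<Longrightarrow> is001 (subst k u t)"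
  using reach_subst fin_spine_subst unfolding is001_def by blast

lemma beta_is001: "beta M N \<Longrightarrow> is001 M \<Longrightarrow> is001 N"
  by (induction rule: beta.induct) (auto simp: inst_def intro: is001_subst)

lemma beta_ge_imp_beta: "beta_ge d M N \<Longrightarrow> beta M N"
  by (induction rule: beta_ge.induct) (auto intro: beta.intros)

lemma rtranclp_beta_ge_is001: "(beta_ge d)\<^sup>*\<^sup>* M N \<Longrightarrow> is001 M \<Longrightarrow> is001 N"
  by (induction rule: rtranclp_induct) (auto dest: beta_ge_imp_beta beta_is001)

lemma rtranclp_map:
  assumes "\<And>x y. r x y \<Longrightarrow> s (f x) (f y)" and "r\<^sup>*\<^sup>* a b"
  shows "s\<^sup>*\<^sup>* (f a) (f b)"
  using assms(2) by induction (auto intro: assms(1) rtranclp.rtrancl_into_rtrancl)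

lemma beta_star_Lam: "beta_star M N \<Longrightarrow> beta_star (Lam M) (Lam N)"
  by (rule rtranclp_map[where f = Lam]) (rule beta.lam)

lemma beta_star_AppL: "beta_star M N \<Longrightarrow> beta_star (App M P) (App N P)"
  by (rule rtranclp_map[where f = "\<lambda>M. App M P"]) (rule beta.appL)

lemma beta_star_imp_beta_ge0: "beta_star M N \<Longrightarrow> (beta_ge 0)\<^sup>*\<^sup>* M N"
  by (rule rtranclp_map[where f = id, simplified]) (rule beta_ge.zero)

lemma beta_ge_star_Lam:
  "(beta_ge (Suc d))\<^sup>*\<^sup>* M N \<Longrightarrow> (beta_ge (Suc d))\<^sup>*\<^sup>* (Lam M) (Lam N)"
  by (rule rtranclp_map[where f = Lam]) (rule beta_ge.lam)

lemma beta_ge_star_AppL: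
  "(beta_ge (Suc d))\<^sup>*\<^sup>* M N \<Longrightarrow> (beta_ge (Suc d))\<^sup>*\<^sup>* (App M P) (App N P)"
  by (rule rtranclp_map[where f = "\<lambda>M. App M P"]) (rule beta_ge.appL)

lemma beta_ge_star_AppR:
  "(beta_ge d)\<^sup>*\<^sup>* M N \<Longrightarrow> (beta_ge (Suc d))\<^sup>*\<^sup>* (App P M) (App P N)"
  by (rule rtranclp_map[where f = "App P"]) (rule beta_ge.appR)

lemma mono_binf_step: "mono binf_step"
proof (intro monoI predicate2I)
  fix X Y :: "iterm \<Rightarrow> iterm \<Rightarrow> bool" and M N
  assume "X \<le> Y" and "binf_step X M N"
  from this(2) show "binf_step Y M N"
    by induction (use \<open>X \<le> Y\<close> in \<open>auto intro: binf_step.intros\<close>)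
qed

lemma binf_unfold: "binf M N \<Longrightarrow> binf_step binf M N"
  using gfp_unfold[OF mono_binf_step] unfolding binf_def by simp

lemma binf_step_factor: "binf_step binf M N \<Longrightarrow> \<exists>M'. beta_star M M' \<and> binf_ge 1 M' N"
proof (induction rule: binf_step.induct)
  case (var M x)
  then show ?case by (auto intro: binf_ge.var)
next
  case (lam M P P')
  then obtain Q where "beta_star P Q" "binf_ge 1 Q P'" by blast
  with lam.hyps(1) show ?case
    by (intro exI[of _ "Lam Q"]) (auto intro: binf_ge.lam beta_star_Lam rtranclp_trans)
next
  case (app M P Q P' Q')
  then obtain R where "beta_star P R" "binf_ge 1 R P'" by blast
  with app.hyps show ?case
    by (intro exI[of _ "App R Q"])
       (auto intro: binf_ge.app binf_ge.zero beta_star_AppL rtranclp_trans)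
qed

lemma binf_ge_factor:
  "binf_ge d M N \<Longrightarrow> \<exists>M'. (beta_ge d)\<^sup>*\<^sup>* M M' \<and> binf_ge (Suc d) M' N"
proof (induction rule: binf_ge.induct)
  case (zero M N)
  then show ?case using binf_step_factor binf_unfold beta_star_imp_beta_ge0 by fastforce
next
  case (var d x)
  then show ?case by (auto intro: binf_ge.var)
next
  case (lam d M M')
  then obtain Q where "(beta_ge (Suc d))\<^sup>*\<^sup>* M Q" "binf_ge (Suc (Suc d)) Q M'" by blast
  then show ?case by (intro exI[of _ "Lam Q"]) (auto intro: binf_ge.lam beta_ge_star_Lam)
next
  case (app d M M' N N')
  then obtain Q R where "(beta_ge (Suc d))\<^sup>*\<^sup>* M Q" "binf_ge (Suc (Suc d)) Q M'"
    and "(beta_ge d)\<^sup>*\<^sup>* N R" "binf_ge (Suc d) R N'" by blast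
  then show ?case
    by (intro exI[of _ "App Q R"])
       (auto intro: binf_ge.app beta_ge_star_AppL beta_ge_star_AppR rtranclp_trans)
qed

theorem mainTheorem6:
  assumes "is001 M" and "is001 N" and "binf M N"
  shows "\<exists>Ms :: nat \<Rightarrow> iterm. Ms 0 = M \<and> (\<forall>i. is001 (Ms i)) \<and>
           (\<forall>d. (beta_ge d)\<^sup>*\<^sup>* (Ms d) (Ms (Suc d)) \<and> binf_ge d (Ms d) N)"
proof -
  let ?P = "\<lambda>d M'. binf_ge d M' N \<and> is001 M' \<and> (d = 0 \<longrightarrow> M' = M)"
  have "\<exists>Ms. \<forall>d. ?P d (Ms d) \<and> (beta_ge d)\<^sup>*\<^sup>* (Ms d) (Ms (Suc d))"
  proof (rule dependent_nat_choice)
    show "\<exists>M'. ?P 0 M'"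
      using assms(1,3) by (auto intro: binf_ge.zero)
  next
    fix d M' assume "?P d M'"
    then show "\<exists>M''. ?P (Suc d) M'' \<and> (beta_ge d)\<^sup>*\<^sup>* M' M''"
      using binf_ge_factor rtranclp_beta_ge_is001 by blast
  qed
  then show ?thesis by blast
qed

end
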